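(* The $C^*$-algebras $\mathcal{Q}_S$ and $\mathcal{O}[\mathbb{Z},H^+,\theta]$ are canonically isomorphic, via $u\mapsto u_1$ and $s_p\mapsto s_p$ for $p\in S$.
   Context: $S\subset\{2,3,\dots\}$ is a non-empty (possibly infinite) set of pairwise relatively prime integers and $H^+$ the submonoid of $(\mathbb{N}^\times,\cdot)$ generated by $S$; $\theta$ is the action of $H^+$ on $\mathbb{Z}$ by multiplication. $\mathcal{Q}_S$ is the universal $C^*$-algebra generated by a unitary $u$ and isometries $(s_p)_{p\in S}$ subject to $s_p^*s_q=s_qs_p^*$ ($p\neq q$), $s_pu=u^ps_p$, $\sum_{m=0}^{p-1}u^ms_ps_p^*u^{-m}=1$. $\mathcal{O}[\mathbb{Z},H^+,\theta]$ is the universal $C^*$-algebra generated by a unitary representation $(u_g)_{g\in\mathbb{Z}}$ of $\mathbb{Z}$ and a representation $(s_h)_{h\in H^+}$ of $H^+$ by isometries ($s_hs_k=s_{hk}$, $s_1=1$) subject to: (CNP1) $s_hu_g=u_{hg}s_h$; (CNP2) $s_h^*u_gs_k=u_{g_1}s_{k/\gcd(h,k)}s_{h/\gcd(h,k)}^*u_{g_2}$ if $g=hg_1+kg_2$ for some $g_1,g_2\in\mathbb{Z}$, and $s_h^*u_gs_k=0$ otherwise; (CNP3) $\sum_{[g]\in\mathbb{Z}/h\mathbb{Z}}u_gs_hs_h^*u_g^*=1$, for all $h,k\in H^+$, $g\in\mathbb{Z}$. *)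

theory Defs
  imports Complex_Main
begin

class cstar_algebra = real_normed_algebra_1 + complete_space +
  fixes adj :: "'a \<Rightarrow> 'a"
    and scaleC :: "complex \<Rightarrow> 'a \<Rightarrow> 'a"
  assumes scaleC_add_right: "scaleC c (x + y) = scaleC c x + scaleC c y"
    and scaleC_add_left: "scaleC (c + d) x = scaleC c x + scaleC d x"
    and scaleC_scaleC: "scaleC c (scaleC d x) = scaleC (c * d) x"
    and scaleC_one: "scaleC 1 x = x"
    and scaleR_scaleC: "scaleR r x = scaleC (complex_of_real r) x"
    and scaleC_mult_left: "scaleC c x * y = scaleC c (x * y)"
    and scaleC_mult_right: "x * scaleC c y = scaleC c (x * y)"
    and norm_scaleC: "norm (scaleC c x) = cmod c * norm x"
    and adj_adj: "adj (adj x) = x"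
    and adj_add: "adj (x + y) = adj x + adj y"
    and adj_mult: "adj (x * y) = adj y * adj x"
    and adj_scaleC: "adj (scaleC c x) = scaleC (cnj c) (adj x)"
    and cstar_identity: "norm (adj x * x) = norm x * norm x"

definition isometry :: "'a::cstar_algebra \<Rightarrow> bool" where
  "isometry v \<longleftrightarrow> adj v * v = 1"

definition unitary :: "'a::cstar_algebra \<Rightarrow> bool" where
  "unitary u \<longleftrightarrow> adj u * u = 1 \<and> u * adj u = 1"

definition upow :: "'a::cstar_algebra \<Rightarrow> int \<Rightarrow> 'a" where
  "upow u m = (if 0 \<le> m then u ^ nat m else adj u ^ nat (- m))"

inductive_set Hplus :: "nat set \<Rightarrow> nat set" for S :: "nat set" where
  one: "1 \<in> Hplus S"
| mult: "p \<in> S \<Longrightarrow> h \<in> Hplus S \<Longrightarrow> p * h \<in> Hplus S"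

definition QS_rel :: "nat set \<Rightarrow> 'a::cstar_algebra \<Rightarrow> (nat \<Rightarrow> 'a) \<Rightarrow> bool" where
  "QS_rel S u s \<longleftrightarrow>
     unitary u \<and>
     (\<forall>p\<in>S. isometry (s p)) \<and>
     (\<forall>p\<in>S. \<forall>q\<in>S. p \<noteq> q \<longrightarrow> adj (s p) * s q = s q * adj (s p)) \<and>
     (\<forall>p\<in>S. s p * u = u ^ p * s p) \<and>
     (\<forall>p\<in>S. (\<Sum>m<p. upow u (int m) * s p * adj (s p) * upow u (- int m)) = 1)"

text \<open>In (CNP3) the sum
  over Z/hZ is taken over the representatives 0,...,h-1.\<close>
definition CNP_rel :: "nat set \<Rightarrow> (int \<Rightarrow> 'a::cstar_algebra) \<Rightarrow> (nat \<Rightarrow> 'a) \<Rightarrow> bool" where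
  "CNP_rel S U V \<longleftrightarrow>
     U 0 = 1 \<and> (\<forall>g k. U (g + k) = U g * U k) \<and> (\<forall>g. unitary (U g)) \<and>
     V 1 = 1 \<and> (\<forall>h\<in>Hplus S. isometry (V h)) \<and>
     (\<forall>h\<in>Hplus S. \<forall>k\<in>Hplus S. V (h * k) = V h * V k) \<and>
     (\<forall>h\<in>Hplus S. \<forall>g. V h * U g = U (int h * g) * V h) \<and>
     (\<forall>h\<in>Hplus S. \<forall>k\<in>Hplus S. \<forall>g.
        (\<forall>g1 g2. g = int h * g1 + int k * g2 \<longrightarrow>
           adj (V h) * U g * V k
             = U g1 * V (k div gcd h k) * adj (V (h div gcd h k)) * U g2) \<and>
        ((\<nexists>g1 g2. g = int h * g1 + int k * g2) \<longrightarrow> adj (V h) * U g * V k = 0)) \<and>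
     (\<forall>h\<in>Hplus S. (\<Sum>g\<in>{0..<int h}. U g * V h * adj (V h) * adj (U g)) = 1)"

end

theory Submission
  imports Defs
begin

text \<open>
  A representation of O[Z, H^+, \<theta>] restricts to one of Q_S: (CNP2) with g = 0 and coprime
  h, k is the relation s_p^* s_q = s_q s_p^*, and (CNP1), (CNP3) specialise directly.

  Conversely, given u and s_p satisfying the relations of Q_S, put U_g = u^g and extend s
  multiplicatively to H^+.  This is possible because the s_p commute: s_p s_q and s_q s_p are
  isometries with (s_p s_q)^* s_q s_p = 1.  (CNP1) and (CNP3) follow by induction along H^+,
  and peeling off generators reduces (CNP2) to s_p^* u^g s_p = 0 whenever p does not divide g.
  That holds because the projections u^m s_p s_p^* u^-m, 0 \<le> m < p, sum to 1 and are
  therefore mutually orthogonal.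

  Orthogonality is proved without spectral theory: for projections P_i summing to 1, put
  e = P_i and z = P_i P_j P_i.  Norm estimates give ||e + c z|| \<le> 1 for all small complex c,
  and averaging (e + c \<omega>^k z)^N over the roots of unity \<omega>^k bounds N ||z|| for every N,
  so z = (P_j P_i)^* P_j P_i vanishes.
\<close>


section \<open>Elementary C*-algebra facts\<close>

lemma scaleC_zero_left [simp]: "scaleC 0 x = 0"
  using scaleC_add_left [of 0 0 x] by simp

lemma scaleC_zero_right [simp]: "scaleC c 0 = 0"
  using scaleC_add_right [of c 0 0] by simp

lemma scaleC_minus_left: "scaleC (- c) x = - scaleC c x"
  using scaleC_add_left [of c "- c" x] by (simp add: eq_neg_iff_add_eq_0 add.commute)

lemma scaleC_diff_right: "scaleC c (x - y) = scaleC c x - scaleC c y"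
  by (metis add_diff_cancel diff_add_cancel scaleC_add_right)

lemma scaleC_sum_right: "scaleC c (sum f A) = (\<Sum>i\<in>A. scaleC c (f i))"
  by (induction A rule: infinite_finite_induct) (auto simp: scaleC_add_right)

lemma scaleC_sum_left: "scaleC (sum f A) x = (\<Sum>i\<in>A. scaleC (f i) x)"
  by (induction A rule: infinite_finite_induct) (auto simp: scaleC_add_left)

lemma scaleC_of_real: "scaleC (of_real r) x = scaleR r x"
  by (simp add: scaleR_scaleC)

lemma of_nat_mult_eq_scaleC: "of_nat n * x = scaleC (of_nat n) x"
  by (metis of_real_of_nat_eq scaleC_of_real scaleR_conv_of_real)

lemma scaleC_power: "(scaleC c x) ^ n = scaleC (c ^ n) (x ^ n)"
  by (induction n)
    (auto simp: scaleC_one scaleC_mult_left scaleC_mult_right scaleC_scaleC mult.commute)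

lemma adj_zero [simp]: "adj 0 = 0"
  using adj_add [of 0 0] by simp

lemma adj_one [simp]: "adj 1 = 1"
  by (metis adj_adj adj_mult mult_1_left)

lemma adj_minus: "adj (- x) = - adj x"
  using adj_add [of x "- x"] by (simp add: eq_neg_iff_add_eq_0 add.commute)

lemma adj_diff: "adj (x - y) = adj x - adj y"
  using adj_add [of x "- y"] adj_minus [of y] by simp

lemma adj_power: "adj (x ^ n) = adj x ^ n"
  by (induction n) (auto simp: adj_mult power_commutes)

lemma adj_mult_self_eq_zero: "adj x * x = 0 \<Longrightarrow> x = 0"
  using cstar_identity [of x] by simp

lemma isometry_mult:
  assumes "isometry a" "isometry b"
  shows "isometry (a * b)"
proof -
  have "adj (a * b) * (a * b) = adj b * (adj a * a) * b"
    by (simp add: adj_mult mult.assoc)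
  then show ?thesis using assms by (simp add: isometry_def)
qed

lemma isometries_eq_if_adj_mult_eq_one:
  fixes a b :: "'a::cstar_algebra"
  assumes "isometry a" "isometry b" "adj a * b = 1"
  shows "a = b"
proof -
  have "adj b * a = 1" using arg_cong [OF assms(3), of adj] by (simp add: adj_mult adj_adj)
  have "adj (a - b) * (a - b) = adj a * a - adj a * b - (adj b * a - adj b * b)"
    by (simp add: adj_diff left_diff_distrib right_diff_distrib)
  also have "\<dots> = 0"
    using assms \<open>adj b * a = 1\<close> by (simp add: isometry_def)
  finally have "a - b = 0" by (rule adj_mult_self_eq_zero)
  then show ?thesis by simp
qed

definition projection :: "'a::cstar_algebra \<Rightarrow> bool" where
  "projection P \<longleftrightarrow> adj P = P \<and> P * P = P"

lemma projection_one_minus: "projection P \<Longrightarrow> projection (1 - P)"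
  by (auto simp: projection_def adj_diff algebra_simps)

lemma norm_projection_le_one:
  assumes "projection P"
  shows "norm P \<le> 1"
proof -
  have "norm P * norm P = norm P"
    using cstar_identity [of P] assms by (simp add: projection_def)
  then have "norm P = 0 \<or> norm P = 1"
    by (metis mult_cancel_right1)
  then show ?thesis by auto
qed

lemma norm_convex_combination_le_one:
  fixes x y :: "'a::real_normed_vector"
  assumes "0 \<le> a" "0 \<le> b" "a + b = 1" "norm x \<le> 1" "norm y \<le> 1"
  shows "norm (a *\<^sub>R x + b *\<^sub>R y) \<le> 1"
proof -
  have "norm (a *\<^sub>R x + b *\<^sub>R y) \<le> a * norm x + b * norm y"
    using norm_triangle_ineq [of "a *\<^sub>R x" "b *\<^sub>R y"] assms by simp
  also have "\<dots> \<le> a * 1 + b * 1"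
    using assms by (intro add_mono mult_left_mono) auto
  finally show ?thesis using assms by simp
qed


section \<open>Projections summing to one are orthogonal\<close>

lemma one_plus_power_eq_sum_binomial:
  fixes x :: "'a::ring_1"
  shows "(1 + x) ^ n = (\<Sum>k\<le>n. of_nat (n choose k) * x ^ k)"
proof (induction n)
  case 0
  then show ?case by simp
next
  case (Suc n)
  define f where "f k = of_nat (n choose k) * x ^ k" for k
  define S where "S = (\<Sum>k\<le>n. f k)"
  have shift: "(\<Sum>k\<le>n. f (Suc k)) = S - 1"
  proof -
    have "(\<Sum>k\<le>Suc n. f k) = f 0 + (\<Sum>k\<le>n. f (Suc k))"
      by (rule sum.atMost_Suc_shift)
    moreover have "(\<Sum>k\<le>Suc n. f k) = S"
      by (simp add: S_def f_def binomial_eq_0)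
    ultimately show ?thesis by (simp add: f_def algebra_simps)
  qed
  have x_S: "x * S = (\<Sum>k\<le>n. of_nat (n choose k) * x ^ Suc k)"
    by (simp add: S_def f_def sum_distrib_left mult_of_nat_commute mult.assoc)
  have "(\<Sum>k\<le>Suc n. of_nat (Suc n choose k) * x ^ k)
        = 1 + (\<Sum>k\<le>n. of_nat (Suc n choose Suc k) * x ^ Suc k)"
    by (subst sum.atMost_Suc_shift) simp
  also have "\<dots> = 1 + (\<Sum>k\<le>n. of_nat (n choose k) * x ^ Suc k) + (\<Sum>k\<le>n. f (Suc k))"
    by (simp add: f_def sum.distrib distrib_right add.assoc)
  also have "\<dots> = S + x * S" using shift x_S by simp
  also have "\<dots> = (1 + x) * (1 + x) ^ n" using Suc.IH by (simp add: S_def f_def algebra_simps)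
  finally show ?case by simp
qed

lemma sum_powers_root_of_unity:
  assumes "0 < m"
  defines "\<omega> \<equiv> cis (2 * pi / real m)"
  shows "(\<Sum>k<m. (\<omega> ^ l) ^ k) = (if m dvd l then of_nat m else 0)"
proof -
  have \<omega>_l: "\<omega> ^ l = cis (2 * pi * real l / real m)"
    by (simp add: \<omega>_def DeMoivre mult_ac)
  have cis_multiple: "cis (2 * pi * real q) = 1" for q :: nat
    by (metis cis_multiple_2pi Ints_of_nat)
  show ?thesis
  proof (cases "m dvd l")
    case True
    then obtain q where "l = m * q" by blast
    then have "2 * pi * real l / real m = 2 * pi * real q" using assms by simp
    then have "\<omega> ^ l = 1" by (simp add: \<omega>_l cis_multiple)
    then show ?thesis using True by simp
  next
    case False
    have "\<omega> ^ l \<noteq> 1"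
    proof
      assume "\<omega> ^ l = 1"
      then have "cos (2 * pi * real l / real m) = 1" by (simp add: \<omega>_l complex_eq_iff)
      then obtain k :: int where "2 * pi * real l / real m = real_of_int k * 2 * pi"
        by (subst (asm) cos_one_2pi_int) blast
      then have "real l = real_of_int k * real m" using assms by (simp add: field_simps)
      then have "int l = k * int m" by (metis of_int_eq_iff of_int_mult of_int_of_nat_eq)
      then show False using False by (metis dvd_triv_right int_dvd_int_iff)
    qed
    moreover have "(\<omega> ^ l) ^ m = 1"
      using assms cis_multiple [of l] by (simp add: \<omega>_l DeMoivre mult.commute)
    ultimately show ?thesis using False by (simp add: geometric_sum)
  qed
qed

lemma corner_power_expansion:
  fixes e z :: "'a::cstar_algebra"
  assumes "e * e = e" "e * z = z" "z * e = z"
  shows "(e + scaleC c z) ^ Suc n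
           = e * (\<Sum>j\<le>Suc n. scaleC (of_nat (Suc n choose j) * c ^ j) (z ^ j))"
proof -
  have "(e + scaleC c z) ^ Suc n = e * (1 + scaleC c z) ^ Suc n"
  proof (induction n)
    case 0
    show ?case using assms by (simp add: distrib_left scaleC_mult_right)
  next
    case (Suc n)
    have "(e + scaleC c z) * e = e * (1 + scaleC c z)"
      using assms by (simp add: distrib_left distrib_right scaleC_mult_left scaleC_mult_right)
    then show ?case using Suc.IH by (metis mult.assoc power_Suc)
  qed
  then show ?thesis
    unfolding one_plus_power_eq_sum_binomial
    by (simp only: scaleC_power of_nat_mult_eq_scaleC scaleC_scaleC)
qed

text \<open>Averaging the powers (e + c \<omega>^k z)^N against the (N+1)-st roots of unity \<omega>^k
  isolates the coefficient of c in the binomial expansion.\<close>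

lemma corner_power_first_coefficient:
  fixes e z :: "'a::cstar_algebra"
  assumes "e * e = e" "e * z = z" "z * e = z" "0 < N"
  defines "\<omega> \<equiv> cis (2 * pi / real (Suc N))"
  shows "(\<Sum>k<Suc N. scaleC (\<omega> ^ (N * k)) ((e + scaleC (c * \<omega> ^ k) z) ^ N))
           = scaleC (of_nat (N * Suc N) * c) z"
proof -
  obtain n where N: "N = Suc n" using assms(4) gr0_implies_Suc by blast
  define a where "a j k = \<omega> ^ (N * k) * (of_nat (N choose j) * (c * \<omega> ^ k) ^ j)" for j k
  have coefficient: "(\<Sum>k<Suc N. a j k) = (if j = 1 then of_nat (N * Suc N) * c else 0)"
    if "j \<le> N" for j
  proof -
    have "Suc N dvd N + j \<longleftrightarrow> j = 1"
    proof
      assume "Suc N dvd N + j"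
      then obtain q where q: "N + j = Suc N * q" by blast
      have "Suc N * q < Suc N * 2" unfolding q [symmetric] using \<open>j \<le> N\<close> by simp
      then have "q < 2" by (simp only: mult_less_cancel1)
      moreover have "q \<noteq> 0" using q assms(4) by (intro notI) simp
      ultimately have "q = 1" by linarith
      then show "j = 1" using q by simp
    qed simp
    moreover have "(\<Sum>k<Suc N. a j k) = of_nat (N choose j) * c ^ j * (\<Sum>k<Suc N. (\<omega> ^ (N + j)) ^ k)"
      unfolding a_def sum_distrib_left
      by (intro sum.cong refl)
        (simp add: power_mult_distrib power_add power_mult [symmetric] mult_ac)
    moreover have "(\<Sum>k<Suc N. (\<omega> ^ (N + j)) ^ k) = (if Suc N dvd N + j then of_nat (Suc N) else 0)"
      unfolding \<omega>_def by (rule sum_powers_root_of_unity) simp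
    ultimately show ?thesis by (cases "j = 1") (simp_all add: algebra_simps del: sum.lessThan_Suc)
  qed
  have "scaleC (\<omega> ^ (N * k)) ((e + scaleC (c * \<omega> ^ k) z) ^ N) = e * (\<Sum>j\<le>N. scaleC (a j k) (z ^ j))"
    for k
    unfolding N corner_power_expansion [OF assms(1-3)]
    by (simp only: N a_def scaleC_mult_right [symmetric] scaleC_sum_right scaleC_scaleC)
  then have "(\<Sum>k<Suc N. scaleC (\<omega> ^ (N * k)) ((e + scaleC (c * \<omega> ^ k) z) ^ N))
      = e * (\<Sum>j\<le>N. scaleC (\<Sum>k<Suc N. a j k) (z ^ j))"
    by (simp only: sum_distrib_left [symmetric] scaleC_sum_left sum.swap [of _ "{..<Suc N}"])
  also have "\<dots> = e * (\<Sum>j\<le>N. if j = 1 then scaleC (of_nat (N * Suc N) * c) (z ^ j) else 0)"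
    by (intro arg_cong [where f = "(*) e"] sum.cong)
      (auto simp: coefficient simp del: sum.lessThan_Suc)
  also have "\<dots> = scaleC (of_nat (N * Suc N) * c) z"
    using N assms(2) by (simp add: sum.delta scaleC_mult_right)
  finally show ?thesis .
qed

lemma corner_eq_zero_if_perturbations_bounded:
  fixes e z :: "'a::cstar_algebra"
  assumes "e * e = e" "e * z = z" "z * e = z" "0 < \<rho>"
    and bounded: "\<And>c. cmod c \<le> \<rho> \<Longrightarrow> norm (e + scaleC c z) \<le> 1"
  shows "z = 0"
proof -
  have linear_bound: "real N * \<rho> * norm z \<le> 1" if "0 < N" for N
  proof -
    define \<omega> where "\<omega> = cis (2 * pi / real (Suc N))"
    have "real (N * Suc N) * \<rho> * norm z
        = norm (\<Sum>k<Suc N. scaleC (\<omega> ^ (N * k)) ((e + scaleC (of_real \<rho> * \<omega> ^ k) z) ^ N))"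
      unfolding \<omega>_def corner_power_first_coefficient [OF assms(1-3) \<open>0 < N\<close>]
      using assms(4) by (simp only: norm_scaleC norm_mult norm_of_nat norm_of_real abs_of_pos)
    also have "\<dots> \<le> (\<Sum>k<Suc N. norm (e + scaleC (of_real \<rho> * \<omega> ^ k) z) ^ N)"
      by (intro order_trans [OF norm_sum] sum_mono)
        (simp add: norm_scaleC norm_power \<omega>_def norm_power_ineq)
    also have "\<dots> \<le> (\<Sum>k<Suc N. 1)"
      using assms by (intro sum_mono power_le_one) (auto simp: \<omega>_def norm_mult norm_power)
    finally have "real (N * Suc N) * \<rho> * norm z \<le> real (Suc N)"
      by simp
    then have "real (Suc N) * (real N * \<rho> * norm z) \<le> real (Suc N) * 1"
      by (simp only: of_nat_mult mult_ac mult_1_left mult_1_right)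
    then show ?thesis by (rule mult_left_le_imp_le) simp
  qed
  show ?thesis
  proof (rule ccontr)
    assume "z \<noteq> 0"
    then have "0 < \<rho> * norm z" using assms by simp
    then obtain N :: nat where "1 / (\<rho> * norm z) < real N" using reals_Archimedean2 by blast
    then have "1 < real N * \<rho> * norm z"
      using \<open>0 < \<rho> * norm z\<close> by (simp add: field_simps)
    moreover from this have "0 < N" by (cases N) auto
    ultimately show False using linear_bound by (metis not_le)
  qed
qed

lemma norm_add_scaleR_le_one_interval:
  fixes x y :: "'a::real_normed_vector"
  assumes plus: "norm (x + \<delta> *\<^sub>R y) \<le> 1" and minus: "norm (x - \<delta> *\<^sub>R y) \<le> 1"
    and a: "\<bar>a\<bar> \<le> \<delta>"
  shows "norm (x + a *\<^sub>R y) \<le> 1"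
proof (cases "\<delta> = 0")
  case True
  then show ?thesis using plus a by simp
next
  case False
  then have "0 < \<delta>" using a by linarith
  define t where "t = (\<delta> + a) / (2 * \<delta>)"
  have "t *\<^sub>R (x + \<delta> *\<^sub>R y) + (1 - t) *\<^sub>R (x - \<delta> *\<^sub>R y)
      = (t + (1 - t)) *\<^sub>R x + (t * \<delta> - (1 - t) * \<delta>) *\<^sub>R y"
    by (simp add: algebra_simps) (metis distrib_left mult_2_right scaleR_add_left)
  also have "t * \<delta> - (1 - t) * \<delta> = a"
    using \<open>0 < \<delta>\<close> by (simp add: t_def field_simps)
  finally have "x + a *\<^sub>R y = t *\<^sub>R (x + \<delta> *\<^sub>R y) + (1 - t) *\<^sub>R (x - \<delta> *\<^sub>R y)"
    by simp
  moreover have "0 \<le> t" "t \<le> 1"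
    using a \<open>0 < \<delta>\<close> by (auto simp: t_def field_simps)
  ultimately show ?thesis
    using plus minus by (simp add: norm_convex_combination_le_one)
qed

lemma norm_diff_scaleR_sum_le_one:
  fixes e :: "'a::real_normed_vector" and \<delta> :: real
  assumes "finite K" "0 \<le> \<delta>" "\<delta> * card K \<le> 1" "norm e \<le> 1"
    and "\<And>k. k \<in> K \<Longrightarrow> norm (e - x k) \<le> 1"
  shows "norm (e - \<delta> *\<^sub>R (\<Sum>k\<in>K. x k)) \<le> 1"
proof -
  have "e - \<delta> *\<^sub>R (\<Sum>k\<in>K. x k) = (1 - \<delta> * card K) *\<^sub>R e + (\<Sum>k\<in>K. \<delta> *\<^sub>R (e - x k))"
    by (simp add: sum_subtractf scaleR_sum_right sum_constant_scaleR algebra_simps)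
  also have "norm \<dots> \<le> (1 - \<delta> * card K) * norm e + (\<Sum>k\<in>K. \<delta> * norm (e - x k))"
    using assms(2,3)
    by (intro order_trans [OF norm_triangle_ineq] add_mono order_trans [OF norm_sum]) simp_all
  also have "\<dots> \<le> (1 - \<delta> * card K) * 1 + (\<Sum>k\<in>K. \<delta> * 1)"
    using assms by (intro add_mono mult_left_mono sum_mono) auto
  finally show ?thesis by simp
qed

lemma norm_add_scaleR_square_le_one:
  fixes e z :: "'a::real_normed_algebra"
  assumes "e * e = e" "norm (e + \<delta> *\<^sub>R z) \<le> 1" "norm (e - \<delta> *\<^sub>R z) \<le> 1"
  shows "norm (e + \<delta>\<^sup>2 *\<^sub>R (z * z)) \<le> 1"
proof -
  define A B where "A = e + \<delta> *\<^sub>R z" and "B = e - \<delta> *\<^sub>R z"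
  have "A * A + B * B = 2 *\<^sub>R (e + \<delta>\<^sup>2 *\<^sub>R (z * z))"
    using assms(1) by (simp add: A_def B_def algebra_simps power2_eq_square scaleR_2)
      (simp add: scaleR_add_left [symmetric])
  moreover have "norm (A * A) \<le> 1" "norm (B * B) \<le> 1"
    using assms(2,3) norm_mult_ineq [of A A] norm_mult_ineq [of B B] unfolding A_def B_def
    by (metis mult_le_one norm_ge_zero order_trans)+
  ultimately have "norm (2 *\<^sub>R (e + \<delta>\<^sup>2 *\<^sub>R (z * z))) \<le> 2"
    by (metis norm_triangle_le add_mono one_add_one)
  then show ?thesis by simp
qed

lemma norm_add_imaginary_scaleC_le_one:
  fixes e z :: "'a::cstar_algebra"
  assumes e: "projection e" and "adj z = z" "e * z = z" "z * e = z"
    and square: "norm (e + \<delta>\<^sup>2 *\<^sub>R (z * z)) \<le> 1" and b: "\<bar>b\<bar> \<le> \<delta>"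
  shows "norm (e + scaleC (\<i> * of_real b) z) \<le> 1"
proof -
  define W where "W = e + scaleC (\<i> * of_real b) z"
  have "adj W * W = (e - scaleC (\<i> * of_real b) z) * (e + scaleC (\<i> * of_real b) z)"
    using e assms(2) by (simp add: W_def projection_def adj_add adj_scaleC scaleC_minus_left)
  also have "\<dots> = e * e + scaleC (\<i> * of_real b) (e * z - z * e)
      - scaleC ((\<i> * of_real b) * (\<i> * of_real b)) (z * z)"
    by (simp add: ring_distribs scaleC_mult_left scaleC_mult_right scaleC_scaleC scaleC_diff_right)
  also have "(\<i> * of_real b) * (\<i> * of_real b) = - of_real (b\<^sup>2)"
    by (simp add: power2_eq_square mult.commute mult.left_commute)
  also have "e * e + scaleC (\<i> * of_real b) (e * z - z * e) - scaleC (- of_real (b\<^sup>2)) (z * z)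
      = e + b\<^sup>2 *\<^sub>R (z * z)"
    using e assms(3,4)
    by (simp add: projection_def scaleC_minus_left scaleC_of_real del: of_real_power)
  finally have W_square: "adj W * W = e + b\<^sup>2 *\<^sub>R (z * z)" .
  have "norm (adj W * W) \<le> 1"
  proof (cases "\<delta> = 0")
    case True
    then show ?thesis using W_square b norm_projection_le_one [OF e] by simp
  next
    case False
    define r where "r = b\<^sup>2 / \<delta>\<^sup>2"
    have "(1 - r) *\<^sub>R e + r *\<^sub>R (e + \<delta>\<^sup>2 *\<^sub>R (z * z)) = e + (r * \<delta>\<^sup>2) *\<^sub>R (z * z)"
      by (simp add: algebra_simps)
    also have "r * \<delta>\<^sup>2 = b\<^sup>2" using False by (simp add: r_def)
    finally have "adj W * W = (1 - r) *\<^sub>R e + r *\<^sub>R (e + \<delta>\<^sup>2 *\<^sub>R (z * z))"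
      using W_square by simp
    moreover have "0 \<le> r" "r \<le> 1"
      using b False by (simp_all add: r_def abs_le_square_iff [symmetric])
    ultimately show ?thesis
      using norm_projection_le_one [OF e] square by (simp add: norm_convex_combination_le_one)
  qed
  then have "(norm W)\<^sup>2 \<le> 1\<^sup>2" by (simp add: cstar_identity power2_eq_square)
  then show ?thesis unfolding W_def by (rule power2_le_imp_le) simp
qed

lemma norm_add_scaleC_le_one:
  fixes e z :: "'a::cstar_algebra"
  assumes e: "projection e" and "adj z = z" "e * z = z" "z * e = z"
    and plus: "norm (e + \<delta> *\<^sub>R z) \<le> 1" and minus: "norm (e - \<delta> *\<^sub>R z) \<le> 1"
    and c: "cmod c \<le> \<delta> / 2"
  shows "norm (e + scaleC c z) \<le> 1"
proof -
  have re: "norm (e + (2 * Re c) *\<^sub>R z) \<le> 1"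
    using abs_Re_le_cmod [of c] c by (intro norm_add_scaleR_le_one_interval [OF plus minus]) auto
  have "norm (e + \<delta>\<^sup>2 *\<^sub>R (z * z)) \<le> 1"
    using e plus minus by (intro norm_add_scaleR_square_le_one) (auto simp: projection_def)
  then have im: "norm (e + scaleC (\<i> * of_real (2 * Im c)) z) \<le> 1"
    using abs_Im_le_cmod [of c] c by (intro norm_add_imaginary_scaleC_le_one [OF e assms(2-4)]) auto
  have "(2 * Re c) *\<^sub>R z + scaleC (\<i> * of_real (2 * Im c)) z = 2 *\<^sub>R scaleC c z"
    unfolding scaleR_scaleC scaleC_scaleC scaleC_add_left [symmetric]
    by (rule arg_cong [where f = "\<lambda>a. scaleC a z"]) (simp add: complex_eq_iff)
  then have "2 *\<^sub>R (e + scaleC c z)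
      = (e + (2 * Re c) *\<^sub>R z) + (e + scaleC (\<i> * of_real (2 * Im c)) z)"
    by (simp add: algebra_simps scaleR_2)
  then have "2 * norm (e + scaleC c z) \<le> norm (e + (2 * Re c) *\<^sub>R z)
      + norm (e + scaleC (\<i> * of_real (2 * Im c)) z)"
    by (metis norm_scaleR norm_triangle_ineq abs_numeral)
  then show ?thesis using re im by simp
qed

lemma norm_diff_compression_le_one:
  fixes P Q :: "'a::cstar_algebra"
  assumes P: "projection P" and Q: "projection Q" and t: "0 \<le> t" "t \<le> 1"
  shows "norm (P - t *\<^sub>R (P * Q * P)) \<le> 1"
proof -
  have "1 - t *\<^sub>R Q = (1 - t) *\<^sub>R 1 + t *\<^sub>R (1 - Q)"
    by (simp add: algebra_simps)
  then have one_minus: "norm (1 - t *\<^sub>R Q) \<le> 1"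
    using t norm_projection_le_one [OF projection_one_minus [OF Q]]
    by (simp add: norm_convex_combination_le_one)
  have "P - t *\<^sub>R (P * Q * P) = P * (1 - t *\<^sub>R Q) * P"
    using P by (simp add: projection_def right_diff_distrib left_diff_distrib mult.assoc)
  also have "norm \<dots> \<le> norm (P * (1 - t *\<^sub>R Q)) * norm P"
    by (rule norm_mult_ineq)
  also have "\<dots> \<le> norm P * norm (1 - t *\<^sub>R Q) * norm P"
    by (intro mult_right_mono norm_mult_ineq norm_ge_zero)
  also have "\<dots> \<le> 1 * 1 * 1"
    using one_minus norm_projection_le_one [OF P] by (intro mult_mono) auto
  finally show ?thesis by simp
qed

lemma projections_orthogonal_if_sum_one:
  fixes P :: "'i \<Rightarrow> 'a::cstar_algebra"
  assumes proj: "\<And>k. k \<in> I \<Longrightarrow> projection (P k)" and "finite I" and sum: "(\<Sum>k\<in>I. P k) = 1"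
    and ij: "i \<in> I" "j \<in> I" "i \<noteq> j"
  shows "P j * P i = 0"
proof -
  define e z K \<delta> where "e = P i" and "z = P i * P j * P i" and "K = I - {i, j}"
    and "\<delta> = 1 / real (card I)"
  have e: "projection e" using proj ij by (simp add: e_def)
  have Pj: "projection (P j)" using proj ij by simp
  have z: "adj z = z" "e * z = z" "z * e = z"
    using e Pj unfolding z_def e_def projection_def
    by (simp_all add: adj_mult mult.assoc) (metis mult.assoc)
  have "card {i, j} \<le> card I" using ij \<open>finite I\<close> by (intro card_mono) auto
  then have card: "card I = card K + 2"
    using ij \<open>finite I\<close> by (simp add: K_def card_Diff_subset)
  have \<delta>: "0 < \<delta>" "\<delta> \<le> 1" "\<delta> * card K \<le> 1"
    using card by (auto simp: \<delta>_def field_simps)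
  have "e = (\<Sum>k\<in>I. P i * P k * P i)"
    using e sum by (simp add: e_def projection_def flip: sum_distrib_left sum_distrib_right)
  also have "\<dots> = e + z + (\<Sum>k\<in>K. P i * P k * P i)"
  proof -
    have I: "I = insert i (insert j K)" using ij by (auto simp: K_def)
    have "finite K" "i \<notin> K" "j \<notin> K" using \<open>finite I\<close> by (auto simp: K_def)
    then show ?thesis
      using e ij(3) by (subst I) (simp add: e_def z_def projection_def add.assoc)
  qed
  finally have z_sum: "z = - (\<Sum>k\<in>K. P i * P k * P i)"
    by (simp add: eq_neg_iff_add_eq_0 add.assoc)
  have plus: "norm (e + \<delta> *\<^sub>R z) \<le> 1"
  proof -
    have "norm (e - 1 *\<^sub>R (e * P k * e)) \<le> 1" if "k \<in> K" for k
      using that proj e by (intro norm_diff_compression_le_one) (auto simp: K_def)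
    then have "norm (e - \<delta> *\<^sub>R (\<Sum>k\<in>K. P i * P k * P i)) \<le> 1"
      using \<delta> \<open>finite I\<close> norm_projection_le_one [OF e]
      by (intro norm_diff_scaleR_sum_le_one) (auto simp: K_def e_def)
    then show ?thesis by (simp add: z_sum)
  qed
  have minus: "norm (e - \<delta> *\<^sub>R z) \<le> 1"
    using \<delta> by (simp add: z_def e_def norm_diff_compression_le_one [OF e [unfolded e_def] Pj])
  have "z = 0"
    using \<delta> by (intro corner_eq_zero_if_perturbations_bounded [of e z "\<delta> / 2"]
        norm_add_scaleC_le_one [OF e z plus minus]) (use e z in \<open>auto simp: projection_def\<close>)
  moreover have "z = adj (P j * P i) * (P j * P i)"
    using e Pj unfolding z_def e_def projection_def
    by (simp add: adj_mult mult.assoc) (metis mult.assoc)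
  ultimately show ?thesis by (metis adj_mult_self_eq_zero)
qed


section \<open>Integer powers of a unitary\<close>

lemma upow_zero [simp]: "upow u 0 = 1"
  by (simp add: upow_def)

lemma upow_one [simp]: "upow u 1 = u"
  by (simp add: upow_def)

lemma upow_of_nat: "upow u (int n) = u ^ n"
  by (simp add: upow_def)

lemma upow_uminus_of_nat: "upow u (- int n) = adj u ^ n"
  by (simp add: upow_def)

lemma upow_add_one:
  assumes "unitary u"
  shows "upow u (g + 1) = upow u g * u"
proof (cases g rule: int_cases)
  case (nonneg n)
  then show ?thesis by (metis of_nat_Suc upow_of_nat power_Suc2 add.commute)
next
  case (neg n)
  have "upow u g * u = adj u ^ n * (adj u * u)"
    using neg by (simp only: upow_uminus_of_nat power_Suc2 mult.assoc)
  moreover have "g + 1 = - int n" using neg by simp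
  ultimately show ?thesis using assms by (simp add: upow_uminus_of_nat unitary_def)
qed

lemma upow_diff_one:
  assumes "unitary u"
  shows "upow u (g - 1) = upow u g * adj u"
proof -
  have "upow u g * adj u = upow u (g - 1) * (u * adj u)"
    using upow_add_one [OF assms, of "g - 1"] by (simp add: mult.assoc)
  then show ?thesis using assms by (simp add: unitary_def)
qed

lemma upow_add:
  assumes "unitary u"
  shows "upow u (g + k) = upow u g * upow u k"
proof (induction k rule: int_induct [where k = 0])
  case base
  then show ?case by simp
next
  case (step1 i)
  then show ?case
    using upow_add_one [OF assms] by (metis add.assoc mult.assoc)
next
  case (step2 i)
  then show ?case
    using upow_diff_one [OF assms] by (metis add_diff_eq mult.assoc)
qed

lemma upow_adj: "adj (upow u g) = upow u (- g)"
proof (cases g rule: int_cases)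
  case (nonneg n)
  then show ?thesis by (simp add: upow_of_nat upow_uminus_of_nat adj_power)
next
  case (neg n)
  then show ?thesis
    by (simp add: upow_of_nat upow_uminus_of_nat adj_power adj_adj adj_mult power_commutes
        del: of_nat_Suc)
qed

lemma unitary_upow:
  assumes "unitary u"
  shows "unitary (upow u g)"
  using upow_add [OF assms, of g "- g"] upow_add [OF assms, of "- g" g]
  by (simp add: unitary_def upow_adj)

lemma upow_eq_unitary_representation:
  fixes U :: "int \<Rightarrow> 'a::cstar_algebra"
  assumes "U 0 = 1" and add: "\<And>g k. U (g + k) = U g * U k" and "\<And>g. unitary (U g)"
  shows "upow (U 1) g = U g"
proof -
  have pos: "U 1 ^ n = U (int n)" for n
    by (induction n) (auto simp: assms(1) add [symmetric] add.commute)
  have adj_U: "adj (U g) = U (- g)" for g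
  proof -
    have "adj (U g) * (U g * U (- g)) = adj (U g)"
      using add [of g "- g"] assms(1) by simp
    then show ?thesis using assms(3) [of g] by (simp add: unitary_def mult.assoc [symmetric])
  qed
  have neg: "adj (U 1) ^ n = U (- int n)" for n
  proof (induction n)
    case (Suc n)
    have "adj (U 1) ^ Suc n = U (- 1) * U (- int n)"
      using Suc by (simp add: adj_U)
    then show ?case by (simp flip: add)
  qed (simp add: assms(1))
  show ?thesis
    by (cases g rule: int_cases) (simp_all only: upow_of_nat upow_uminus_of_nat pos neg)
qed


section \<open>The monoid H^+ and its representations\<close>

lemma Suc_0_in_Hplus [simp]: "Suc 0 \<in> Hplus S"
  using Hplus.one by simp

lemma Hplus_mult: "h \<in> Hplus S \<Longrightarrow> k \<in> Hplus S \<Longrightarrow> h * k \<in> Hplus S"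
  by (induction rule: Hplus.induct) (auto simp: mult.assoc intro: Hplus.mult)

lemma generator_in_Hplus: "p \<in> S \<Longrightarrow> p \<in> Hplus S"
  using Hplus.mult [OF _ Hplus.one] by simp

locale coprime_generators =
  fixes S :: "nat set"
  assumes generator_ge_2: "p \<in> S \<Longrightarrow> 2 \<le> p"
    and generators_coprime: "p \<in> S \<Longrightarrow> q \<in> S \<Longrightarrow> p \<noteq> q \<Longrightarrow> coprime p q"
begin

lemma Hplus_pos: "h \<in> Hplus S \<Longrightarrow> 0 < h"
  by (induction rule: Hplus.induct) (auto dest: generator_ge_2)

lemma Hplus_div_generator: "h \<in> Hplus S \<Longrightarrow> p \<in> S \<Longrightarrow> p dvd h \<Longrightarrow> h div p \<in> Hplus S"
proof (induction rule: Hplus.induct)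
  case one
  then show ?case using generator_ge_2 [of p] by auto
next
  case (mult q h)
  show ?case
  proof (cases "q = p")
    case True
    then show ?thesis using mult generator_ge_2 [of p] by simp
  next
    case False
    then have "p dvd h"
      using mult generators_coprime coprime_dvd_mult_right_iff by blast
    then have "q * h div p = q * (h div p)" by (simp add: div_mult_swap)
    then show ?thesis using mult \<open>p dvd h\<close> Hplus.mult by simp
  qed
qed

lemma coprime_generator_Hplus: "h \<in> Hplus S \<Longrightarrow> p \<in> S \<Longrightarrow> \<not> p dvd h \<Longrightarrow> coprime p h"
proof (induction rule: Hplus.induct)
  case (mult q h)
  then have "p \<noteq> q" by auto
  then have "coprime p q" using mult generators_coprime by blast
  moreover have "\<not> p dvd h" using mult.prems by (metis dvd_mult)
  ultimately show ?case using mult by simp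
qed simp

lemma gcd_generator_mult:
  assumes "p \<in> S" "k \<in> Hplus S"
  shows "gcd (p * h) k = (if p dvd k then p * gcd h (k div p) else gcd h k)"
proof (cases "p dvd k")
  case True
  then show ?thesis by (metis dvd_mult_div_cancel gcd_mult_distrib_nat)
next
  case False
  then have "coprime p k" using assms coprime_generator_Hplus by blast
  then show ?thesis using False by (simp add: gcd_mult_left_left_cancel coprime_commute)
qed

lemma Hplus_div_gcd: "h \<in> Hplus S \<Longrightarrow> k \<in> Hplus S \<Longrightarrow> h div gcd h k \<in> Hplus S"
proof (induction arbitrary: k rule: Hplus.induct)
  case one
  then show ?case by (simp add: Hplus.one)
next
  case (mult p h)
  show ?case
  proof (cases "p dvd k")
    case True
    then have "k div p \<in> Hplus S" using Hplus_div_generator mult by blast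
    moreover have "p * h div gcd (p * h) k = h div gcd h (k div p)"
      using True mult generator_ge_2 [of p] by (simp add: gcd_generator_mult)
    ultimately show ?thesis using mult.IH by simp
  next
    case False
    then have "p * h div gcd (p * h) k = p * (h div gcd h k)"
      using mult by (simp add: gcd_generator_mult div_mult_swap)
    then show ?thesis using mult Hplus.mult by simp
  qed
qed

end

definition least_generator_dvd :: "nat set \<Rightarrow> nat \<Rightarrow> nat" where
  "least_generator_dvd S h = (LEAST p. p \<in> S \<and> 2 \<le> p \<and> p dvd h)"

text \<open>The guard 2 \<le> p only serves to make the recursion terminate.\<close>

function Hplus_ext :: "nat set \<Rightarrow> (nat \<Rightarrow> 'a::monoid_mult) \<Rightarrow> nat \<Rightarrow> 'a" where
  "Hplus_ext S s h =
     (if 1 < h \<and> (\<exists>p\<in>S. 2 \<le> p \<and> p dvd h)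
      then s (least_generator_dvd S h) * Hplus_ext S s (h div least_generator_dvd S h)
      else 1)"
  by auto
termination
proof (relation "measure (\<lambda>(S, s, h). h)")
  fix S :: "nat set" and s :: "nat \<Rightarrow> 'a" and h :: nat
  assume h: "1 < h \<and> (\<exists>p\<in>S. 2 \<le> p \<and> p dvd h)"
  then have "2 \<le> least_generator_dvd S h"
    unfolding least_generator_dvd_def by (metis (mono_tags, lifting) LeastI_ex)
  then show "((S, s, h div least_generator_dvd S h), S, s, h) \<in> measure (\<lambda>(S, s, h). h)"
    using h by simp
qed simp

declare Hplus_ext.simps [simp del]

text \<open>Both forms of the unit are needed: the simplifier writes 1 :: nat as Suc 0 in places.\<close>

lemma Hplus_ext_one [simp]: "Hplus_ext S s 1 = 1" "Hplus_ext S s (Suc 0) = 1"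
  by (simp_all add: Hplus_ext.simps)

context coprime_generators
begin

lemma Hplus_ext_dvd:
  fixes s :: "nat \<Rightarrow> 'a::monoid_mult"
  assumes commute: "\<And>p q. p \<in> S \<Longrightarrow> q \<in> S \<Longrightarrow> s p * s q = s q * s p"
  shows "h \<in> Hplus S \<Longrightarrow> p \<in> S \<Longrightarrow> p dvd h \<Longrightarrow> Hplus_ext S s h = s p * Hplus_ext S s (h div p)"
proof (induction h arbitrary: p rule: less_induct)
  case (less h)
  have "0 < h" using less Hplus_pos by blast
  have ex: "\<exists>p\<in>S. 2 \<le> p \<and> p dvd h" using less generator_ge_2 by blast
  define q where "q = least_generator_dvd S h"
  have q: "q \<in> S" "2 \<le> q" "q dvd h"
    using LeastI_ex [of "\<lambda>p. p \<in> S \<and> 2 \<le> p \<and> p dvd h"] ex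
    unfolding q_def least_generator_dvd_def by auto
  have "1 < h" using q \<open>0 < h\<close> dvd_imp_le [of q h] by linarith
  then have h_q: "Hplus_ext S s h = s q * Hplus_ext S s (h div q)"
    using ex by (subst Hplus_ext.simps) (simp add: q_def)
  show ?case
  proof (cases "q = p")
    case True
    then show ?thesis using h_q by simp
  next
    case False
    have "coprime p q" using generators_coprime False less q by blast
    then have "p dvd h div q" "q dvd h div p"
      using less q by (metis coprime_commute coprime_dvd_mult_right_iff dvd_mult_div_cancel)+
    moreover have "h div q < h" "h div p < h"
      using q generator_ge_2 [OF less(3)] \<open>0 < h\<close> by simp_all
    moreover have "h div q \<in> Hplus S" "h div p \<in> Hplus S"
      using Hplus_div_generator less q by blast+
    moreover have "h div q div p = h div p div q" by (metis div_mult2_eq mult.commute)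
    ultimately show ?thesis
      using h_q less.IH less(3) q(1) commute [OF q(1) less(3)] by (simp add: mult.assoc [symmetric])
  qed
qed

lemma Hplus_ext_mult_generator:
  fixes s :: "nat \<Rightarrow> 'a::monoid_mult"
  assumes "\<And>p q. p \<in> S \<Longrightarrow> q \<in> S \<Longrightarrow> s p * s q = s q * s p" and "p \<in> S" "h \<in> Hplus S"
  shows "Hplus_ext S s (p * h) = s p * Hplus_ext S s h"
  using Hplus_ext_dvd [OF assms(1), where h = "p * h" and p = p] assms(2,3) Hplus.mult
    generator_ge_2 [OF assms(2)]
  by simp

end


section \<open>From Q_S to O[Z, H^+, \<theta>]\<close>

lemma sum_int_atLeastLessThan: "(\<Sum>g\<in>{0..<int n}. f g) = (\<Sum>i<n. f (int i))"
proof -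
  have "{0..<int n} = int ` {..<n}"
    by (simp add: image_int_atLeastLessThan lessThan_atLeast0)
  then show ?thesis by (simp add: sum.reindex)
qed

lemma sum_lessThan_mult:
  fixes p n :: nat
  shows "(\<Sum>i<p * n. f i) = (\<Sum>b<n. \<Sum>a<p. f (a + p * b))"
proof (induction n)
  case (Suc n)
  have split: "(\<Sum>i<m + k. f i) = (\<Sum>i<m. f i) + (\<Sum>a<k. f (a + m))" for m k
    by (induction k) (auto simp: add_ac)
  have "p * Suc n = p * n + p" by simp
  then show ?case by (simp only: split Suc.IH sum.lessThan_Suc)
qed simp

locale QS_family = coprime_generators S for S +
  fixes u :: "'a::cstar_algebra" and s :: "nat \<Rightarrow> 'a"
  assumes QS: "QS_rel S u s"
begin

abbreviation U where "U \<equiv> upow u"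

abbreviation V where "V \<equiv> Hplus_ext S s"

lemma unitary_u: "unitary u"
  using QS by (simp add: QS_rel_def)

lemma isometry_s: "p \<in> S \<Longrightarrow> isometry (s p)"
  using QS by (simp add: QS_rel_def)

lemma adj_s_mult_s: "p \<in> S \<Longrightarrow> adj (s p) * s p = 1"
  using isometry_s by (simp add: isometry_def)

lemma nica_covariance: "p \<in> S \<Longrightarrow> q \<in> S \<Longrightarrow> p \<noteq> q \<Longrightarrow> adj (s p) * s q = s q * adj (s p)"
  using QS by (simp add: QS_rel_def)

lemma s_mult_u: "p \<in> S \<Longrightarrow> s p * u = u ^ p * s p"
  using QS by (simp add: QS_rel_def)

lemma sum_range_projections: "p \<in> S \<Longrightarrow> (\<Sum>m<p. U (int m) * s p * adj (s p) * U (- int m)) = 1"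
  using QS by (simp add: QS_rel_def)

lemma U_add: "U (g + k) = U g * U k"
  using upow_add [OF unitary_u] .

lemma U_uminus_mult: "U (- g) * U g = 1"
  using U_add [of "- g" g] by simp

lemma s_commute: "p \<in> S \<Longrightarrow> q \<in> S \<Longrightarrow> s p * s q = s q * s p"
proof (cases "p = q")
  case False
  assume pq: "p \<in> S" "q \<in> S"
  have iso: "isometry (s p * s q)" "isometry (s q * s p)"
    using isometry_s isometry_mult pq by blast+
  have "adj (s p * s q) * (s q * s p) = adj (s q) * (adj (s p) * s q) * s p"
    by (simp add: adj_mult mult.assoc)
  also have "\<dots> = 1"
    using nica_covariance [OF pq False] adj_s_mult_s pq by (simp add: mult.assoc)
  finally show ?thesis by (rule isometries_eq_if_adj_mult_eq_one [OF iso])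
qed simp

lemma s_mult_U:
  assumes p: "p \<in> S"
  shows "s p * U g = U (int p * g) * s p"
proof (induction g rule: int_induct [where k = 0])
  case base
  then show ?case by simp
next
  case (step1 i)
  have "s p * U (i + 1) = U (int p * i) * (s p * u)"
    using step1 by (metis upow_add_one [OF unitary_u] mult.assoc)
  also have "\<dots> = U (int p * (i + 1)) * s p"
    using p by (simp add: s_mult_u upow_of_nat U_add distrib_left mult.assoc)
  finally show ?case .
next
  case (step2 i)
  have "U (- int p) * s p * u = (U (- int p) * U (int p)) * s p"
    using s_mult_u [OF p] by (simp add: upow_of_nat mult.assoc)
  then have "U (- int p) * s p * u = s p"
    by (simp only: U_uminus_mult mult_1_left)
  then have s_adj_u: "s p * adj u = U (- int p) * s p"
    using unitary_u by (metis mult.assoc mult_1_right unitary_def)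
  have "s p * U (i - 1) = U (int p * i) * (s p * adj u)"
    using step2 by (metis upow_diff_one [OF unitary_u] mult.assoc)
  also have "\<dots> = U (int p * (i - 1)) * s p"
    by (simp add: s_adj_u U_add [symmetric] mult.assoc [symmetric] right_diff_distrib)
  finally show ?case .
qed

text \<open>The range projections of the isometries u^m s_p, m < p, sum to 1 and are therefore
  mutually orthogonal.\<close>

lemma adj_s_mult_U_mult_s:
  assumes p: "p \<in> S" and g: "\<not> int p dvd g"
  shows "adj (s p) * U g * s p = 0"
proof -
  define P where "P m = U (int m) * s p * adj (s p) * U (- int m)" for m
  have "projection (P m)" for m
  proof -
    have "adj (P m) = P m"
      by (simp add: P_def adj_mult upow_adj adj_adj adj_power upow_of_nat upow_uminus_of_nat
          mult.assoc)
    have "P m * P m = U (int m) * s p * (adj (s p) * (U (- int m) * U (int m)) * s p)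
        * adj (s p) * U (- int m)"
      by (simp add: P_def mult.assoc)
    also have "\<dots> = P m"
      by (simp only: U_uminus_mult adj_s_mult_s [OF p] mult_1_left mult_1_right P_def)
    finally show ?thesis using \<open>adj (P m) = P m\<close> by (simp add: projection_def)
  qed
  define r where "r = nat (g mod int p)"
  have "0 \<le> g mod int p" "g mod int p < int p" "g mod int p \<noteq> 0"
    using g generator_ge_2 [OF p] by (simp_all add: dvd_eq_mod_eq_0)
  then have "0 < r" "r < p" by (simp_all add: r_def)
  then have "P 0 * P r = 0"
    using \<open>\<And>m. projection (P m)\<close> sum_range_projections [OF p]
    by (intro projections_orthogonal_if_sum_one [of "{..<p}"]) (auto simp: P_def)
  moreover have "adj (s p) * (P 0 * P r) * U (int r) * s p
      = (adj (s p) * s p) * (adj (s p) * U (int r) * s p)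
        * (adj (s p) * (U (- int r) * U (int r)) * s p)"
    by (simp add: P_def mult.assoc)
  ultimately have orth: "adj (s p) * U (int r) * s p = 0"
    using p by (simp add: adj_s_mult_s U_uminus_mult)
  have "g = int r + int p * (g div int p)"
    using generator_ge_2 [OF p] by (simp add: r_def)
  then have "adj (s p) * U g * s p = adj (s p) * U (int r) * (U (int p * (g div int p)) * s p)"
    by (metis U_add mult.assoc)
  also have "\<dots> = adj (s p) * U (int r) * s p * U (g div int p)"
    by (simp add: s_mult_U [OF p] mult.assoc)
  finally show ?thesis using orth by simp
qed

lemma V_mult_generator: "p \<in> S \<Longrightarrow> h \<in> Hplus S \<Longrightarrow> V (p * h) = s p * V h"
  by (rule Hplus_ext_mult_generator [OF s_commute])

lemma V_generator: "p \<in> S \<Longrightarrow> V p = s p"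
  using V_mult_generator [of p 1] Hplus.one by simp

lemma isometry_V: "h \<in> Hplus S \<Longrightarrow> isometry (V h)"
  by (induction rule: Hplus.induct)
    (auto simp: isometry_def [of 1] V_mult_generator isometry_mult isometry_s)

lemma V_mult: "h \<in> Hplus S \<Longrightarrow> k \<in> Hplus S \<Longrightarrow> V (h * k) = V h * V k"
  by (induction rule: Hplus.induct) (simp_all add: V_mult_generator Hplus_mult mult.assoc)

lemma V_mult_U: "h \<in> Hplus S \<Longrightarrow> V h * U g = U (int h * g) * V h"
proof (induction arbitrary: g rule: Hplus.induct)
  case one
  then show ?case by simp
next
  case (mult p h)
  have "V (p * h) * U g = s p * U (int h * g) * V h"
    using mult by (simp add: V_mult_generator mult.assoc)
  also have "\<dots> = U (int (p * h) * g) * V (p * h)"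
    using mult by (simp add: s_mult_U V_mult_generator mult.assoc)
  finally show ?case .
qed

lemma adj_V_mult_U: "h \<in> Hplus S \<Longrightarrow> adj (V h) * U (int h * g) = U g * adj (V h)"
  using arg_cong [OF V_mult_U [of h "- g"], of adj] by (simp add: adj_mult upow_adj)

lemma adj_s_mult_V:
  "k \<in> Hplus S \<Longrightarrow> p \<in> S \<Longrightarrow> \<not> p dvd k \<Longrightarrow> adj (s p) * V k = V k * adj (s p)"
proof (induction rule: Hplus.induct)
  case one
  then show ?case by simp
next
  case (mult q k)
  then have "q \<noteq> p" "\<not> p dvd k" by (auto simp: dvd_mult)
  then show ?case
    using mult nica_covariance [of p q]
    by (simp add: V_mult_generator mult.assoc [symmetric]) (simp add: mult.assoc)
qed

lemma adj_V_mult_V: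
  "h \<in> Hplus S \<Longrightarrow> k \<in> Hplus S \<Longrightarrow> adj (V h) * V k = V (k div gcd h k) * adj (V (h div gcd h k))"
proof (induction arbitrary: k rule: Hplus.induct)
  case one
  then show ?case by simp
next
  case (mult p h)
  show ?case
  proof (cases "p dvd k")
    case True
    define k' where "k' = k div p"
    have k: "k = p * k'" "k' \<in> Hplus S"
      using Hplus_div_generator mult(1,4) True by (simp_all add: k'_def)
    have "gcd (p * h) k = p * gcd h k'"
      using True mult(1,4) by (simp add: gcd_generator_mult k'_def)
    then have "k div gcd (p * h) k = k' div gcd h k'" "p * h div gcd (p * h) k = h div gcd h k'"
      using generator_ge_2 [OF mult(1)] by (simp_all add: k(1))
    moreover have "adj (V (p * h)) * V k = adj (V h) * (adj (s p) * s p) * V k'"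
      using mult(1,2) k by (simp add: V_mult_generator adj_mult mult.assoc)
    ultimately show ?thesis
      using mult.IH [OF k(2)] adj_s_mult_s [OF mult(1)] by simp
  next
    case False
    have g: "gcd (p * h) k = gcd h k" using False mult by (simp add: gcd_generator_mult)
    have h': "h div gcd h k \<in> Hplus S" using Hplus_div_gcd mult by blast
    have "adj (V (p * h)) * V k = adj (V h) * V k * adj (s p)"
      using mult(1,2) adj_s_mult_V [OF mult(4) mult(1) False]
      by (simp add: V_mult_generator adj_mult mult.assoc)
    also have "\<dots> = V (k div gcd h k) * adj (s p * V (h div gcd h k))"
      using mult.IH [OF mult(4)] by (simp add: adj_mult mult.assoc [symmetric])
    also have "\<dots> = V (k div gcd (p * h) k) * adj (V (p * h div gcd (p * h) k))"
      using V_mult_generator [OF mult(1) h'] by (simp add: g div_mult_swap)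
    finally show ?thesis .
  qed
qed

lemma adj_V_mult_U_mult_V_cancel_generator:
  assumes "p \<in> S" "h \<in> Hplus S" "k \<in> Hplus S"
  shows "adj (V (p * h)) * U (int p * g) * V (p * k) = adj (V h) * U g * V k"
proof -
  have "adj (V (p * h)) * U (int p * g) * V (p * k) = adj (V h) * (adj (s p) * s p) * U g * V k"
    using assms by (simp add: V_mult_generator adj_mult s_mult_U mult.assoc)
  then show ?thesis using adj_s_mult_s [OF assms(1)] by simp
qed

lemma adj_V_mult_U_mult_V_coprime_generator:
  assumes "p \<in> S" "h \<in> Hplus S" "k \<in> Hplus S" "\<not> p dvd k"
  shows "adj (V (p * h)) * U (int p * g1 + int k * g2) * V k
           = adj (V h) * U g1 * V k * adj (s p) * U g2"
proof -
  have "adj (V (p * h)) * U (int p * g1 + int k * g2) * V k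
      = adj (V h) * (adj (V p) * U (int p * g1)) * (U (int k * g2) * V k)"
    using assms by (simp add: V_mult_generator V_generator adj_mult U_add mult.assoc)
  also have "\<dots> = adj (V h) * U g1 * (adj (s p) * V k) * U g2"
    using adj_V_mult_U [OF generator_in_Hplus [OF assms(1)]] V_mult_U [OF assms(3)]
    by (simp add: V_generator [OF assms(1)] mult.assoc)
  also have "\<dots> = adj (V h) * U g1 * V k * adj (s p) * U g2"
    by (simp add: adj_s_mult_V [OF assms(3,1,4)] mult.assoc)
  finally show ?thesis .
qed

lemma adj_V_mult_U_mult_V_eq_zero:
  "h \<in> Hplus S \<Longrightarrow> k \<in> Hplus S \<Longrightarrow> \<not> int (gcd h k) dvd g \<Longrightarrow> adj (V h) * U g * V k = 0"
proof (induction arbitrary: k g rule: Hplus.induct)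
  case one
  then show ?case by simp
next
  case (mult p h)
  show ?case
  proof (cases "p dvd k")
    case True
    then obtain k' where k: "k = p * k'" "k' \<in> Hplus S"
      using Hplus_div_generator mult(1,4) by (metis dvd_mult_div_cancel)
    show ?thesis
    proof (cases "int p dvd g")
      case True
      then obtain g' where g': "g = int p * g'" by blast
      have "gcd (p * h) k = p * gcd h k'" by (simp add: k(1) gcd_mult_distrib_nat)
      then have "\<not> int (gcd h k') dvd g'" using mult(5) g' by (simp add: mult_dvd_mono)
      then show ?thesis
        using mult.IH [OF k(2)] adj_V_mult_U_mult_V_cancel_generator [OF mult(1,2) k(2)] k g'
        by simp
    next
      case False
      then have "adj (V (p * h)) * U g * V k = adj (V h) * (adj (s p) * U g * s p) * V k'"
        using mult(1,2) k by (simp add: V_mult_generator adj_mult mult.assoc)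
      then show ?thesis using adj_s_mult_U_mult_s [OF mult(1) False] by simp
    qed
  next
    case False
    have "coprime p k" using coprime_generator_Hplus mult(1,4) False by blast
    then obtain a b where "a * int p + b * int k = 1"
      by (metis bezw_aux coprime_iff_gcd_eq_1 of_nat_1)
    then have g: "g = int p * (g * a) + int k * (g * b)"
      by (metis mult.right_neutral distrib_left mult.commute mult.left_commute)
    have "\<not> int (gcd h k) dvd g * a"
    proof
      assume "int (gcd h k) dvd g * a"
      then have "int (gcd h k) dvd int p * (g * a) + int k * (g * b)"
        by (simp add: dvd_add dvd_mult dvd_mult2)
      then have "int (gcd h k) dvd g" using g by metis
      then show False using mult(5) False mult(1,4) by (simp add: gcd_generator_mult)
    qed
    then have "adj (V h) * U (g * a) * V k = 0" using mult.IH [OF mult(4)] by blast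
    then have "adj (V (p * h)) * U (int p * (g * a) + int k * (g * b)) * V k = 0"
      by (simp add: adj_V_mult_U_mult_V_coprime_generator [OF mult(1,2,4) False])
    then show ?thesis by (subst g) assumption
  qed
qed

lemma sum_range_projections_V:
  "h \<in> Hplus S \<Longrightarrow> (\<Sum>g\<in>{0..<int h}. U g * V h * adj (V h) * adj (U g)) = 1"
proof (induction rule: Hplus.induct)
  case one
  have "{0..<int 1} = {0::int}" by auto
  then show ?case by simp
next
  case (mult p h)
  define E where "E b = U b * V h * adj (V h) * adj (U b)" for b
  define F where "F g = U g * V (p * h) * adj (V (p * h)) * adj (U g)" for g
  have F_split: "F (int (a + p * b)) = U (int a) * s p * E (int b) * adj (s p) * adj (U (int a))"
    for a b
  proof -
    have commute: "U (int (a + p * b)) * s p = U (int a) * s p * U (int b)"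
      using mult(1) by (simp add: U_add s_mult_U mult.assoc)
    have commute_adj:
      "adj (s p) * adj (U (int (a + p * b))) = adj (U (int b)) * adj (s p) * adj (U (int a))"
      using arg_cong [OF commute, of adj] by (simp add: adj_mult mult.assoc)
    have "F (int (a + p * b)) = (U (int (a + p * b)) * s p) * (V h * adj (V h))
        * (adj (s p) * adj (U (int (a + p * b))))"
      using mult(1,2) by (simp add: F_def V_mult_generator adj_mult mult.assoc)
    also have "\<dots> = U (int a) * s p * E (int b) * adj (s p) * adj (U (int a))"
      by (simp only: commute commute_adj) (simp add: E_def mult.assoc)
    finally show ?thesis .
  qed
  have "(\<Sum>g\<in>{0..<int (p * h)}. F g) = (\<Sum>b<h. \<Sum>a<p. F (int (a + p * b)))"
    by (simp only: sum_int_atLeastLessThan sum_lessThan_mult)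
  also have "\<dots> = (\<Sum>a<p. U (int a) * s p * (\<Sum>b<h. E (int b)) * adj (s p) * adj (U (int a)))"
    unfolding F_split by (simp add: sum.swap [of _ "{..<h}"] sum_distrib_left sum_distrib_right)
  also have "\<dots> = 1"
    using mult.IH sum_range_projections [OF mult(1)]
    by (simp add: E_def sum_int_atLeastLessThan upow_adj)
  finally show ?case by (simp add: F_def)
qed

lemma CNP_rel_holds: "CNP_rel S U V"
  unfolding CNP_rel_def
proof (intro conjI allI ballI impI)
  fix h k g g1 g2
  assume h: "h \<in> Hplus S" and k: "k \<in> Hplus S"
  show "adj (V h) * U g * V k = U g1 * V (k div gcd h k) * adj (V (h div gcd h k)) * U g2"
    if "g = int h * g1 + int k * g2"
  proof -
    have "adj (V h) * U g * V k = (adj (V h) * U (int h * g1)) * (U (int k * g2) * V k)"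
      by (simp add: that U_add mult.assoc)
    also have "\<dots> = U g1 * (adj (V h) * V k) * U g2"
      using adj_V_mult_U [OF h] V_mult_U [OF k] by (simp add: mult.assoc)
    finally show ?thesis using adj_V_mult_V [OF h k] by (simp add: mult.assoc)
  qed
  show "adj (V h) * U g * V k = 0" if "\<nexists>g1 g2. g = int h * g1 + int k * g2"
  proof -
    have "\<not> int (gcd h k) dvd g"
    proof
      assume "int (gcd h k) dvd g"
      then obtain t where t: "g = int (gcd h k) * t" by blast
      obtain a b where "int (gcd h k) = a * int h + b * int k" using bezw_aux by blast
      then have "g = int h * (a * t) + int k * (b * t)" using t by (simp add: algebra_simps)
      then show False using that by blast
    qed
    then show ?thesis using adj_V_mult_U_mult_V_eq_zero [OF h k] by blast
  qed
qed (auto simp: upow_add [OF unitary_u] unitary_upow [OF unitary_u] isometry_V V_mult V_mult_U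
    sum_range_projections_V)

end


section \<open>The isomorphism\<close>

lemma QS_rel_if_CNP_rel:
  fixes U :: "int \<Rightarrow> 'a::cstar_algebra"
  assumes cnp: "CNP_rel S U V" and coprime: "\<forall>p\<in>S. \<forall>q\<in>S. p \<noteq> q \<longrightarrow> coprime p q"
  shows "QS_rel S (U 1) V"
proof -
  have U: "U 0 = 1" "\<And>g k. U (g + k) = U g * U k" "\<And>g. unitary (U g)"
    using cnp by (simp_all add: CNP_rel_def)
  have isometry_V: "\<And>h. h \<in> Hplus S \<Longrightarrow> isometry (V h)"
    and CNP1: "\<And>h g. h \<in> Hplus S \<Longrightarrow> V h * U g = U (int h * g) * V h"
    and CNP3: "\<And>h. h \<in> Hplus S \<Longrightarrow> (\<Sum>g\<in>{0..<int h}. U g * V h * adj (V h) * adj (U g)) = 1"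
    using cnp by (simp_all add: CNP_rel_def)
  have "\<forall>h\<in>Hplus S. \<forall>k\<in>Hplus S. \<forall>g. (\<forall>g1 g2. g = int h * g1 + int k * g2 \<longrightarrow>
      adj (V h) * U g * V k = U g1 * V (k div gcd h k) * adj (V (h div gcd h k)) * U g2) \<and>
      ((\<nexists>g1 g2. g = int h * g1 + int k * g2) \<longrightarrow> adj (V h) * U g * V k = 0)"
    using cnp unfolding CNP_rel_def by (elim conjE) assumption
  then have CNP2: "adj (V h) * U 0 * V k = U 0 * V (k div gcd h k) * adj (V (h div gcd h k)) * U 0"
    if "h \<in> Hplus S" "k \<in> Hplus S" for h k
    using that by (metis add_0 mult_zero_right)
  have upow_U: "upow (U 1) g = U g" for g
    using U by (rule upow_eq_unitary_representation)
  have adj_U: "adj (U g) = U (- g)" for g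
    using upow_adj [of "U 1" g] by (simp add: upow_U)
  show ?thesis
    unfolding QS_rel_def
  proof (intro conjI ballI impI)
    show "unitary (U 1)" by (rule U(3))
    show "isometry (V p)" if "p \<in> S" for p
      using isometry_V generator_in_Hplus that by blast
    show "adj (V p) * V q = V q * adj (V p)" if "p \<in> S" "q \<in> S" "p \<noteq> q" for p q
    proof -
      have "gcd p q = 1" using coprime that by (simp add: coprime_iff_gcd_eq_1)
      then show ?thesis
        using CNP2 [OF generator_in_Hplus generator_in_Hplus, OF that(1,2)] U(1) by simp
    qed
    show "V p * U 1 = U 1 ^ p * V p" if "p \<in> S" for p
      using CNP1 [OF generator_in_Hplus [OF that], of 1] upow_U [of "int p"]
      by (simp add: upow_of_nat)
    show "(\<Sum>m<p. upow (U 1) (int m) * V p * adj (V p) * upow (U 1) (- int m)) = 1" if "p \<in> S" for p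
      using CNP3 [OF generator_in_Hplus [OF that]]
      by (simp add: sum_int_atLeastLessThan upow_U adj_U)
  qed
qed

theorem proposition2p10:
  fixes S :: "nat set"
  assumes "S \<noteq> {}"
    and "\<forall>p\<in>S. 2 \<le> p"
    and "\<forall>p\<in>S. \<forall>q\<in>S. p \<noteq> q \<longrightarrow> coprime p q"
  shows "(\<forall>(U :: int \<Rightarrow> 'a::cstar_algebra) V. CNP_rel S U V \<longrightarrow> QS_rel S (U 1) V) \<and>
         (\<forall>(u :: 'a) s. QS_rel S u s \<longrightarrow>
            (\<exists>U V. CNP_rel S U V \<and> U 1 = u \<and> (\<forall>p\<in>S. V p = s p)))"
proof (intro conjI allI impI)
  show "QS_rel S (U 1) V" if "CNP_rel S U V" for U :: "int \<Rightarrow> 'a" and V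
    using QS_rel_if_CNP_rel [OF that assms(3)] .
  fix u :: 'a and s
  assume "QS_rel S u s"
  then interpret QS_family S u s
    using assms by unfold_locales auto
  show "\<exists>U V. CNP_rel S U V \<and> U 1 = u \<and> (\<forall>p\<in>S. V p = s p)"
    using CNP_rel_holds V_generator by (intro exI [of _ "upow u"] exI [of _ "Hplus_ext S s"]) auto
qed

end
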